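(* Let $(\mathcal A\to\mathcal H)$ be a Hopf algebra in $\mathcal{LM}$. Let $\mathcal G_0(\mathcal H)$ be the group of group-like elements of $\mathcal H$ and $\mathcal G_1(\mathcal A)$ the set of edge-like elements of $\mathcal A$, with maps $s,t:\mathcal G_1(\mathcal A)\to\mathcal G_0(\mathcal H)$ assigning to an edge-like $a$ the group-like elements $s(a),t(a)$ with $\Delta_1(a)=a\otimes t(a)+s(a)\otimes a$. Then the two-sided action of $\mathcal H$ on $\mathcal A$ restricts to a two-sided action of $\mathcal G_0(\mathcal H)$ on $\mathcal G_1(\mathcal A)$, and $(\mathcal G_0(\mathcal H)\overset{s}{\underset{t}{\leftleftarrows}}\mathcal G_1(\mathcal A))$ is a group-like graph.
   Context: Over a field $\mathbf k$ of characteristic $0$, the category $\mathcal{LM}$ has objects linear maps $U\to V$ and tensor product $(U\to V)\otimes(U'\to V')=(U\otimes V'+V\otimes U'\to V\otimes V')$. A Hopf algebra in $\mathcal{LM}$ is $(\mathcal A\xrightarrow{f}\mathcal H)$ with $\mathcal H$ a Hopf algebra (coproduct $\Delta_0$, antipode $S_0$), $\mathcal A$ an $\mathcal H$-bimodule, $f$ a bimodule map, a bimodule map $\Delta_1:\mathcal A\to\mathcal A\otimes\mathcal H+\mathcal H\otimes\mathcal A$ with $\Delta_0f=(f\otimes\mathrm{Id}+\mathrm{Id}\otimes f)\Delta_1$, and $S_1:\mathcal A\to\mathcal A$ with $fS_1=S_0f$ and $\mu\circ(S_1\otimes\mathrm{Id}+S_0\otimes\mathrm{Id})\circ\Delta_1=\mu\circ(\mathrm{Id}\otimes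 S_0+\mathrm{Id}\otimes S_1)\circ\Delta_1=0$. An element $a\in\mathcal A$ is edge-like if $\Delta_1(a)=a\otimes t(a)+s(a)\otimes a$ for some group-like elements $s(a),t(a)$ of $\mathcal H$. A group-like graph is a directed graph $(V\overset{s}{\underset{t}{\leftleftarrows}}E)$ together with an associative graph morphism from its Cartesian square (vertices $V\times V$, arrows $E\times V\sqcup V\times E$) to itself such that the induced semigroup structure on $V$ is a group; here the multiplication is given on vertices by the product in $\mathcal G_0(\mathcal H)$ and on arrows by the two-sided action. *)

theory Defs
  imports Main "HOL.Vector_Spaces"
begin

section \<open>Tensor products of vector spaces (standard construction)\<close>

text \<open>An element of V (x) W is represented (Sweedler style) by a finite list of pairs
[(v1,w1),...,(vn,wn)] standing for the sum v1 (x) w1 + ... + vn (x) wn.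
Two representatives denote the same tensor iff the difference of their formal
sums in the free vector space on V x W lies in the subspace spanned by the
bilinearity relations, i.e. V (x) W = F(V x W) / R.\<close>

definition delta :: "'x \<Rightarrow> 'x \<Rightarrow> 'k::zero_neq_one" where
  "delta p = (\<lambda>q. if q = p then 1 else 0)"

definition fsum :: "'x list \<Rightarrow> 'x \<Rightarrow> 'k::semiring_1" where
  "fsum xs = (\<lambda>p. of_nat (count_list xs p))"

inductive_set tens_rel ::
  "('k::field \<Rightarrow> 'v::ab_group_add \<Rightarrow> 'v) \<Rightarrow> ('k \<Rightarrow> 'w::ab_group_add \<Rightarrow> 'w)
    \<Rightarrow> (('v \<times> 'w) \<Rightarrow> 'k) set"
  for sv sw where
  zero: "(\<lambda>_. 0) \<in> tens_rel sv sw"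
| add: "x \<in> tens_rel sv sw \<Longrightarrow> y \<in> tens_rel sv sw \<Longrightarrow> (\<lambda>p. x p + y p) \<in> tens_rel sv sw"
| smult: "x \<in> tens_rel sv sw \<Longrightarrow> (\<lambda>p. c * x p) \<in> tens_rel sv sw"
| addL: "(\<lambda>p. delta (v + v', w) p - delta (v, w) p - delta (v', w) p) \<in> tens_rel sv sw"
| addR: "(\<lambda>p. delta (v, w + w') p - delta (v, w) p - delta (v, w') p) \<in> tens_rel sv sw"
| scL: "(\<lambda>p. delta (sv c v, w) p - c * delta (v, w) p) \<in> tens_rel sv sw"
| scR: "(\<lambda>p. delta (v, sw c w) p - c * delta (v, w) p) \<in> tens_rel sv sw"

definition tens_eq ::
  "('k::field \<Rightarrow> 'v::ab_group_add \<Rightarrow> 'v) \<Rightarrow> ('k \<Rightarrow> 'w::ab_group_add \<Rightarrow> 'w)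
    \<Rightarrow> ('v \<times> 'w) list \<Rightarrow> ('v \<times> 'w) list \<Rightarrow> bool" where
  "tens_eq sv sw xs ys \<longleftrightarrow> (\<lambda>p. fsum xs p - fsum ys p) \<in> tens_rel sv sw"

inductive_set tens3_rel ::
  "('k::field \<Rightarrow> 'h::ab_group_add \<Rightarrow> 'h) \<Rightarrow> (('h \<times> 'h \<times> 'h) \<Rightarrow> 'k) set"
  for s where
  zero: "(\<lambda>_. 0) \<in> tens3_rel s"
| add: "x \<in> tens3_rel s \<Longrightarrow> y \<in> tens3_rel s \<Longrightarrow> (\<lambda>p. x p + y p) \<in> tens3_rel s"
| smult: "x \<in> tens3_rel s \<Longrightarrow> (\<lambda>p. c * x p) \<in> tens3_rel s"
| add1: "(\<lambda>p. delta (u + u', v, w) p - delta (u, v, w) p - delta (u', v, w) p) \<in> tens3_rel s"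
| add2: "(\<lambda>p. delta (u, v + v', w) p - delta (u, v, w) p - delta (u, v', w) p) \<in> tens3_rel s"
| add3: "(\<lambda>p. delta (u, v, w + w') p - delta (u, v, w) p - delta (u, v, w') p) \<in> tens3_rel s"
| sc1: "(\<lambda>p. delta (s c u, v, w) p - c * delta (u, v, w) p) \<in> tens3_rel s"
| sc2: "(\<lambda>p. delta (u, s c v, w) p - c * delta (u, v, w) p) \<in> tens3_rel s"
| sc3: "(\<lambda>p. delta (u, v, s c w) p - c * delta (u, v, w) p) \<in> tens3_rel s"

definition tens3_eq ::
  "('k::field \<Rightarrow> 'h::ab_group_add \<Rightarrow> 'h)
    \<Rightarrow> ('h \<times> 'h \<times> 'h) list \<Rightarrow> ('h \<times> 'h \<times> 'h) list \<Rightarrow> bool" where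
  "tens3_eq s xs ys \<longleftrightarrow> (\<lambda>p. fsum xs p - fsum ys p) \<in> tens3_rel s"

definition tens_scale :: "('k \<Rightarrow> 'v \<Rightarrow> 'v) \<Rightarrow> 'k \<Rightarrow> ('v \<times> 'w) list \<Rightarrow> ('v \<times> 'w) list" where
  "tens_scale sv c xs = map (\<lambda>(v, w). (sv c v, w)) xs"

definition linear_map :: "('k \<Rightarrow> 'v::ab_group_add \<Rightarrow> 'v) \<Rightarrow> ('k \<Rightarrow> 'w::ab_group_add \<Rightarrow> 'w)
    \<Rightarrow> ('v \<Rightarrow> 'w) \<Rightarrow> bool" where
  "linear_map sv sw g \<longleftrightarrow> (\<forall>x y. g (x + y) = g x + g y) \<and> (\<forall>c x. g (sv c x) = sw c (g x))"

section \<open>Hopf algebras over k\<close>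

definition hopf_algebra ::
  "('k::field_char_0 \<Rightarrow> 'h::ring_1 \<Rightarrow> 'h) \<Rightarrow> ('h \<Rightarrow> ('h \<times> 'h) list) \<Rightarrow> ('h \<Rightarrow> 'k)
    \<Rightarrow> ('h \<Rightarrow> 'h) \<Rightarrow> bool" where
  "hopf_algebra sH \<Delta> \<epsilon> S \<longleftrightarrow>
     vector_space sH \<and>
     (\<forall>c x y. sH c (x * y) = sH c x * y \<and> sH c (x * y) = x * sH c y) \<and>
     \<comment> \<open>coproduct and counit are linear\<close>
     (\<forall>x y. tens_eq sH sH (\<Delta> (x + y)) (\<Delta> x @ \<Delta> y)) \<and>
     (\<forall>c x. tens_eq sH sH (\<Delta> (sH c x)) (tens_scale sH c (\<Delta> x))) \<and>
     linear_map sH (*) \<epsilon> \<and>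
     \<comment> \<open>coassociativity\<close>
     (\<forall>h. tens3_eq sH
        (concat (map (\<lambda>(x, y). map (\<lambda>(u, v). (u, v, y)) (\<Delta> x)) (\<Delta> h)))
        (concat (map (\<lambda>(x, y). map (\<lambda>(u, v). (x, u, v)) (\<Delta> y)) (\<Delta> h)))) \<and>
     \<comment> \<open>counit\<close>
     (\<forall>h. sum_list (map (\<lambda>(x, y). sH (\<epsilon> x) y) (\<Delta> h)) = h) \<and>
     (\<forall>h. sum_list (map (\<lambda>(x, y). sH (\<epsilon> y) x) (\<Delta> h)) = h) \<and>
     \<comment> \<open>coproduct and counit are algebra maps\<close>
     (\<forall>x y. tens_eq sH sH (\<Delta> (x * y))
        (concat (map (\<lambda>(a, b). map (\<lambda>(c, d). (a * c, b * d)) (\<Delta> y)) (\<Delta> x)))) \<and>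
     tens_eq sH sH (\<Delta> 1) [(1, 1)] \<and>
     (\<forall>x y. \<epsilon> (x * y) = \<epsilon> x * \<epsilon> y) \<and> \<epsilon> 1 = 1 \<and>
     \<comment> \<open>antipode\<close>
     linear_map sH sH S \<and>
     (\<forall>h. sum_list (map (\<lambda>(x, y). S x * y) (\<Delta> h)) = sH (\<epsilon> h) 1) \<and>
     (\<forall>h. sum_list (map (\<lambda>(x, y). x * S y) (\<Delta> h)) = sH (\<epsilon> h) 1)"

definition group_like :: "('k::field \<Rightarrow> 'h::ring_1 \<Rightarrow> 'h) \<Rightarrow> ('h \<Rightarrow> ('h \<times> 'h) list)
    \<Rightarrow> ('h \<Rightarrow> 'k) \<Rightarrow> 'h \<Rightarrow> bool" where
  "group_like sH \<Delta> \<epsilon> g \<longleftrightarrow> tens_eq sH sH (\<Delta> g) [(g, g)] \<and> \<epsilon> g = 1"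

section \<open>Hopf algebras in the category LM\<close>

text \<open>The tensor product in LM: (U->V) (x) (U'->V') = (U (x) V' (+) V (x) U' -> V (x) V'),
the sum being a direct sum. Hence an element of A (x) H + H (x) A is represented
by a pair of representatives (one in A (x) H, one in H (x) A).\<close>

definition dsum_eq ::
  "('k::field \<Rightarrow> 'h::ab_group_add \<Rightarrow> 'h) \<Rightarrow> ('k \<Rightarrow> 'a::ab_group_add \<Rightarrow> 'a)
    \<Rightarrow> (('a \<times> 'h) list \<times> ('h \<times> 'a) list) \<Rightarrow> (('a \<times> 'h) list \<times> ('h \<times> 'a) list) \<Rightarrow> bool" where
  "dsum_eq sH sA X Y \<longleftrightarrow> tens_eq sA sH (fst X) (fst Y) \<and> tens_eq sH sA (snd X) (snd Y)"

definition dsum_lact ::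
  "('h::ring_1 \<Rightarrow> ('h \<times> 'h) list) \<Rightarrow> ('h \<Rightarrow> 'a \<Rightarrow> 'a) \<Rightarrow> 'h
    \<Rightarrow> (('a \<times> 'h) list \<times> ('h \<times> 'a) list) \<Rightarrow> (('a \<times> 'h) list \<times> ('h \<times> 'a) list)" where
  "dsum_lact \<Delta> lact h X =
     (concat (map (\<lambda>(h1, h2). map (\<lambda>(a, y). (lact h1 a, h2 * y)) (fst X)) (\<Delta> h)),
      concat (map (\<lambda>(h1, h2). map (\<lambda>(y, a). (h1 * y, lact h2 a)) (snd X)) (\<Delta> h)))"

definition dsum_ract ::
  "('h::ring_1 \<Rightarrow> ('h \<times> 'h) list) \<Rightarrow> ('a \<Rightarrow> 'h \<Rightarrow> 'a)
    \<Rightarrow> (('a \<times> 'h) list \<times> ('h \<times> 'a) list) \<Rightarrow> 'h \<Rightarrow> (('a \<times> 'h) list \<times> ('h \<times> 'a) list)" where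
  "dsum_ract \<Delta> ract X h =
     (concat (map (\<lambda>(h1, h2). map (\<lambda>(a, y). (ract a h1, y * h2)) (fst X)) (\<Delta> h)),
      concat (map (\<lambda>(h1, h2). map (\<lambda>(y, a). (y * h1, ract a h2)) (snd X)) (\<Delta> h)))"

definition hopf_LM ::
  "('k::field_char_0 \<Rightarrow> 'h::ring_1 \<Rightarrow> 'h) \<Rightarrow> ('h \<Rightarrow> ('h \<times> 'h) list) \<Rightarrow> ('h \<Rightarrow> 'k)
    \<Rightarrow> ('h \<Rightarrow> 'h)
    \<Rightarrow> ('k \<Rightarrow> 'a::ab_group_add \<Rightarrow> 'a) \<Rightarrow> ('h \<Rightarrow> 'a \<Rightarrow> 'a) \<Rightarrow> ('a \<Rightarrow> 'h \<Rightarrow> 'a)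
    \<Rightarrow> ('a \<Rightarrow> 'h) \<Rightarrow> ('a \<Rightarrow> ('a \<times> 'h) list \<times> ('h \<times> 'a) list) \<Rightarrow> ('a \<Rightarrow> 'a) \<Rightarrow> bool" where
  "hopf_LM sH \<Delta>0 \<epsilon> S0 sA lact ract f \<Delta>1 S1 \<longleftrightarrow>
     hopf_algebra sH \<Delta>0 \<epsilon> S0 \<and>
     \<comment> \<open>A is an H-bimodule\<close>
     vector_space sA \<and>
     (\<forall>x y a. lact (x + y) a = lact x a + lact y a) \<and>
     (\<forall>x a b. lact x (a + b) = lact x a + lact x b) \<and>
     (\<forall>c x a. lact (sH c x) a = sA c (lact x a) \<and> lact x (sA c a) = sA c (lact x a)) \<and>
     (\<forall>x y a. lact (x * y) a = lact x (lact y a)) \<and> (\<forall>a. lact 1 a = a) \<and>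
     (\<forall>x y a. ract a (x + y) = ract a x + ract a y) \<and>
     (\<forall>x a b. ract (a + b) x = ract a x + ract b x) \<and>
     (\<forall>c x a. ract a (sH c x) = sA c (ract a x) \<and> ract (sA c a) x = sA c (ract a x)) \<and>
     (\<forall>x y a. ract a (x * y) = ract (ract a x) y) \<and> (\<forall>a. ract a 1 = a) \<and>
     (\<forall>x y a. lact x (ract a y) = ract (lact x a) y) \<and>
     \<comment> \<open>f is a bimodule map\<close>
     linear_map sA sH f \<and>
     (\<forall>h a. f (lact h a) = h * f a) \<and> (\<forall>h a. f (ract a h) = f a * h) \<and>
     \<comment> \<open>Delta1 is a bimodule map\<close>
     (\<forall>a b. dsum_eq sH sA (\<Delta>1 (a + b)) (fst (\<Delta>1 a) @ fst (\<Delta>1 b), snd (\<Delta>1 a) @ snd (\<Delta>1 b))) \<and>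
     (\<forall>c a. dsum_eq sH sA (\<Delta>1 (sA c a))
        (tens_scale sA c (fst (\<Delta>1 a)), tens_scale sH c (snd (\<Delta>1 a)))) \<and>
     (\<forall>h a. dsum_eq sH sA (\<Delta>1 (lact h a)) (dsum_lact \<Delta>0 lact h (\<Delta>1 a))) \<and>
     (\<forall>h a. dsum_eq sH sA (\<Delta>1 (ract a h)) (dsum_ract \<Delta>0 ract (\<Delta>1 a) h)) \<and>
     \<comment> \<open>compatibility Delta0 f = (f (x) Id + Id (x) f) Delta1\<close>
     (\<forall>a. tens_eq sH sH (\<Delta>0 (f a))
        (map (\<lambda>(b, y). (f b, y)) (fst (\<Delta>1 a)) @ map (\<lambda>(y, b). (y, f b)) (snd (\<Delta>1 a)))) \<and>
     \<comment> \<open>antipode component S1\<close>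
     linear_map sA sA S1 \<and>
     (\<forall>a. f (S1 a) = S0 (f a)) \<and>
     (\<forall>a. sum_list (map (\<lambda>(b, y). ract (S1 b) y) (fst (\<Delta>1 a)))
          + sum_list (map (\<lambda>(y, b). lact (S0 y) b) (snd (\<Delta>1 a))) = 0) \<and>
     (\<forall>a. sum_list (map (\<lambda>(b, y). ract b (S0 y)) (fst (\<Delta>1 a)))
          + sum_list (map (\<lambda>(y, b). lact y (S1 b)) (snd (\<Delta>1 a))) = 0)"

definition edge_like_st where
  "edge_like_st sH \<Delta>0 \<epsilon> sA \<Delta>1 a s t \<longleftrightarrow>
     group_like sH \<Delta>0 \<epsilon> s \<and> group_like sH \<Delta>0 \<epsilon> t \<and>
     dsum_eq sH sA (\<Delta>1 a) ([(a, t)], [(s, a)])"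

definition edge_like where
  "edge_like sH \<Delta>0 \<epsilon> sA \<Delta>1 a \<longleftrightarrow> (\<exists>s t. edge_like_st sH \<Delta>0 \<epsilon> sA \<Delta>1 a s t)"

definition edge_src where
  "edge_src sH \<Delta>0 \<epsilon> sA \<Delta>1 a = (THE s. \<exists>t. edge_like_st sH \<Delta>0 \<epsilon> sA \<Delta>1 a s t)"

definition edge_tgt where
  "edge_tgt sH \<Delta>0 \<epsilon> sA \<Delta>1 a = (THE t. \<exists>s. edge_like_st sH \<Delta>0 \<epsilon> sA \<Delta>1 a s t)"

section \<open>Group-like graphs\<close>

text \<open>A directed graph (V, E, src, tgt) with a graph morphism from its Cartesian
square to itself, given by m on vertices V x V and by the right action r on arrows
E x V and the left action l on arrows V x E, which is associative (on all
vertex and arrow components of the Cartesian cube), and such that (V, m) is a group.\<close>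
definition group_like_graph ::
  "'v set \<Rightarrow> 'e set \<Rightarrow> ('e \<Rightarrow> 'v) \<Rightarrow> ('e \<Rightarrow> 'v) \<Rightarrow> ('v \<Rightarrow> 'v \<Rightarrow> 'v)
    \<Rightarrow> ('e \<Rightarrow> 'v \<Rightarrow> 'e) \<Rightarrow> ('v \<Rightarrow> 'e \<Rightarrow> 'e) \<Rightarrow> bool" where
  "group_like_graph V E src tgt m r l \<longleftrightarrow>
     (\<forall>e\<in>E. src e \<in> V \<and> tgt e \<in> V) \<and>
     (\<forall>x\<in>V. \<forall>y\<in>V. m x y \<in> V) \<and>
     (\<forall>e\<in>E. \<forall>v\<in>V. r e v \<in> E \<and> src (r e v) = m (src e) v \<and> tgt (r e v) = m (tgt e) v) \<and>
     (\<forall>v\<in>V. \<forall>e\<in>E. l v e \<in> E \<and> src (l v e) = m v (src e) \<and> tgt (l v e) = m v (tgt e)) \<and>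
     (\<forall>x\<in>V. \<forall>y\<in>V. \<forall>z\<in>V. m (m x y) z = m x (m y z)) \<and>
     (\<forall>e\<in>E. \<forall>x\<in>V. \<forall>y\<in>V. r (r e x) y = r e (m x y)) \<and>
     (\<forall>x\<in>V. \<forall>e\<in>E. \<forall>y\<in>V. r (l x e) y = l x (r e y)) \<and>
     (\<forall>x\<in>V. \<forall>y\<in>V. \<forall>e\<in>E. l (m x y) e = l x (l y e)) \<and>
     (\<exists>u\<in>V. (\<forall>x\<in>V. m u x = x \<and> m x u = x) \<and> (\<forall>x\<in>V. \<exists>y\<in>V. m x y = u \<and> m y x = u))"

end

theory Submission
  imports Defs "HOL-Library.Function_Algebras"
begin

(*
  The group-like elements form a group: contracting \<Delta>0 g = g \<otimes> g against (x, y) \<mapsto> S0 x * y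
  and (x, y) \<mapsto> x * S0 y shows that S0 g is a two-sided inverse of g, and S0 g is again group-like.
  If \<Delta>1 a = a \<otimes> t + s \<otimes> a and g is group-like, then since \<Delta>1 is a bimodule map,
  \<Delta>1 (g a) = g a \<otimes> g t + g s \<otimes> g a, and symmetrically for a g; moreover g a \<noteq> 0 because
  S0 g undoes the action. Source and target of a nonzero edge-like a are unique: a linear functional
  \<phi> with \<phi> a = 1, applied to the factor in A, recovers t from a \<otimes> t and s from s \<otimes> a.
  The axioms of a group-like graph are then the bimodule axioms of A.

  Tensors are represented by lists of pairs, so every map out of a tensor product must be shown to
  respect the defining relations; this is done once, for maps that are bilinear modulo a subspace.
*)

section \<open>Tensor products of representatives\<close>

lemma fsum_Nil [simp]: "fsum [] p = 0"
  by (simp add: fsum_def)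

lemma fsum_Cons [simp]: "fsum (x # xs) p = delta x p + fsum xs p"
  by (auto simp: fsum_def delta_def)

lemma fsum_append [simp]: "fsum (xs @ ys) p = fsum xs p + fsum ys p"
  by (simp add: fsum_def)

lemma fsum_notin: "p \<notin> set xs \<Longrightarrow> fsum xs p = 0"
  by (simp add: fsum_def count_list_0_iff)

lemma fsum_map: "fsum (map F ys) p = (\<Sum>y\<leftarrow>ys. delta (F y) p)"
  by (induction ys) simp_all

lemma fsum_concat: "fsum (concat (map M xs)) = (\<Sum>x\<leftarrow>xs. fsum (M x))"
  by (induction xs) (auto simp: fun_eq_iff)

lemma module_pointwise: "module (\<lambda>(c::'k::comm_ring_1) (x::'p \<Rightarrow> 'k) p. c * x p)"
  by unfold_locales (auto simp: fun_eq_iff algebra_simps)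

lemma tens_rel_subspace: "module.subspace (\<lambda>c x p. c * x p) (tens_rel sv sw)"
  using tens_rel.zero tens_rel.add tens_rel.smult
  by (auto simp: module.subspace_def[OF module_pointwise] zero_fun_def plus_fun_def)

lemma tens_rel_sum_list:
  "(\<And>y. y \<in> set ys \<Longrightarrow> g y \<in> tens_rel sv sw) \<Longrightarrow> (\<lambda>p. \<Sum>y\<leftarrow>ys. g y p) \<in> tens_rel sv sw"
proof (induction ys)
  case Nil
  show ?case using tens_rel.zero by simp
next
  case (Cons y ys)
  then show ?case using tens_rel.add[of "g y" sv sw] by simp
qed

lemma tens_eq_refl: "tens_eq sv sw xs xs"
  using tens_rel.zero by (simp add: tens_eq_def)

lemma tens_eq_sym: "tens_eq sv sw xs ys \<Longrightarrow> tens_eq sv sw ys xs"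
  using tens_rel.smult[where c = "-1"] by (fastforce simp: tens_eq_def)

lemma tens_eq_trans [trans]: "tens_eq sv sw xs ys \<Longrightarrow> tens_eq sv sw ys zs \<Longrightarrow> tens_eq sv sw xs zs"
  using tens_rel.add by (fastforce simp: tens_eq_def)

lemma tens_eq_append:
  "tens_eq sv sw xs xs' \<Longrightarrow> tens_eq sv sw ys ys' \<Longrightarrow> tens_eq sv sw (xs @ ys) (xs' @ ys')"
  using tens_rel.add by (fastforce simp: tens_eq_def algebra_simps)

definition lincomb :: "('k \<Rightarrow> 'z::comm_monoid_add \<Rightarrow> 'z) \<Rightarrow> ('q \<Rightarrow> 'z) \<Rightarrow> 'q set \<Rightarrow> ('q \<Rightarrow> 'k) \<Rightarrow> 'z"
  where "lincomb sz \<Psi> S x = (\<Sum>q\<in>S. sz (x q) (\<Psi> q))"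

context module
begin

lemma lincomb_add: "lincomb scale \<Psi> S (\<lambda>q. x q + y q) = lincomb scale \<Psi> S x + lincomb scale \<Psi> S y"
  by (simp add: lincomb_def scale_left_distrib sum.distrib)

lemma lincomb_diff: "lincomb scale \<Psi> S (\<lambda>q. x q - y q) = lincomb scale \<Psi> S x - lincomb scale \<Psi> S y"
  by (simp add: lincomb_def scale_left_diff_distrib sum_subtractf)

lemma lincomb_scale: "lincomb scale \<Psi> S (\<lambda>q. c * x q) = c *s lincomb scale \<Psi> S x"
  by (simp add: lincomb_def scale_sum_right)

lemma lincomb_delta:
  assumes "finite S" "a \<in> S"
  shows "lincomb scale \<Psi> S (delta a) = \<Psi> a"
proof -
  have "delta a q *s \<Psi> q = (if q = a then \<Psi> q else 0)" for q
    by (simp add: delta_def)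
  with assms show ?thesis by (simp add: lincomb_def)
qed

lemma lincomb_fsum: "finite S \<Longrightarrow> set xs \<subseteq> S \<Longrightarrow> lincomb scale \<Psi> S (fsum xs) = (\<Sum>x\<leftarrow>xs. \<Psi> x)"
proof (induction xs)
  case Nil
  then show ?case by (simp add: lincomb_def fsum_def)
next
  case (Cons x xs)
  have "fsum (x # xs) = (\<lambda>p. delta x p + fsum xs p)" by (simp add: fun_eq_iff)
  with Cons show ?case by (simp add: lincomb_add lincomb_delta)
qed

lemma lincomb_support:
  assumes "finite S" "{q. x q \<noteq> 0} \<subseteq> S"
  shows "finite {q. x q \<noteq> 0} \<and> lincomb scale \<Psi> {q. x q \<noteq> 0} x = lincomb scale \<Psi> S x"
  using assms finite_subset unfolding lincomb_def by (auto intro: sum.mono_neutral_left)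

lemma lincomb_support_in:
  assumes "finite S" "{q. x q \<noteq> 0} \<subseteq> S" "lincomb scale \<Psi> S x \<in> R"
  shows "finite {q. x q \<noteq> 0} \<and> lincomb scale \<Psi> {q. x q \<noteq> 0} x \<in> R"
  using lincomb_support[OF assms(1,2)] assms(3) by simp

end

lemma support_delta_diff:
  "{q. delta a q - delta b q - delta c q \<noteq> (0::'k::ring_1)} \<subseteq> {a, b, c}"
  by (auto simp: delta_def)

lemma support_delta_diff_scale:
  "{q. delta a q - c * delta b q \<noteq> (0::'k::ring_1)} \<subseteq> {a, b}"
  by (auto simp: delta_def)

definition bilinear_modulo ::
  "('k \<Rightarrow> 'v::plus \<Rightarrow> 'v) \<Rightarrow> ('k \<Rightarrow> 'w::plus \<Rightarrow> 'w) \<Rightarrow> ('k \<Rightarrow> 'z::ab_group_add \<Rightarrow> 'z) \<Rightarrow> 'z set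
    \<Rightarrow> ('v \<times> 'w \<Rightarrow> 'z) \<Rightarrow> bool" where
  "bilinear_modulo sv sw sz R \<Psi> \<longleftrightarrow>
     (\<forall>v v' w. \<Psi> (v + v', w) - \<Psi> (v, w) - \<Psi> (v', w) \<in> R) \<and>
     (\<forall>v w w'. \<Psi> (v, w + w') - \<Psi> (v, w) - \<Psi> (v, w') \<in> R) \<and>
     (\<forall>c v w. \<Psi> (sv c v, w) - sz c (\<Psi> (v, w)) \<in> R) \<and>
     (\<forall>c v w. \<Psi> (v, sw c w) - sz c (\<Psi> (v, w)) \<in> R)"

lemma tens_rel_lincomb_in_subspace:
  fixes sz :: "'k::field \<Rightarrow> 'z::ab_group_add \<Rightarrow> 'z"
  assumes "x \<in> tens_rel sv sw" and m: "module sz" and R: "module.subspace sz R"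
    and \<Psi>: "bilinear_modulo sv sw sz R \<Psi>"
  shows "finite {q. x q \<noteq> 0} \<and> lincomb sz \<Psi> {q. x q \<noteq> 0} x \<in> R"
proof -
  note lincomb_simps = module.lincomb_diff[OF m] module.lincomb_delta[OF m] module.lincomb_scale[OF m]
  note generators = \<Psi>[unfolded bilinear_modulo_def]
  from assms(1) show ?thesis
  proof induction
    case zero
    show ?case using module.subspace_0[OF m R] by (simp add: lincomb_def)
  next
    case (add x y)
    let ?S = "{q. x q \<noteq> 0} \<union> {q. y q \<noteq> 0}"
    have fin: "finite ?S" using add.IH by simp
    have "finite {q. x q + y q \<noteq> 0} \<and>
        lincomb sz \<Psi> {q. x q + y q \<noteq> 0} (\<lambda>q. x q + y q) = lincomb sz \<Psi> ?S (\<lambda>q. x q + y q)"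
      by (rule module.lincomb_support[OF m fin]) auto
    moreover have "lincomb sz \<Psi> ?S x = lincomb sz \<Psi> {q. x q \<noteq> 0} x"
      using module.lincomb_support[OF m fin, of x] by auto
    moreover have "lincomb sz \<Psi> ?S y = lincomb sz \<Psi> {q. y q \<noteq> 0} y"
      using module.lincomb_support[OF m fin, of y] by auto
    ultimately show ?case
      using add.IH module.subspace_add[OF m R] by (simp add: module.lincomb_add[OF m])
  next
    case (smult x c)
    have fin: "finite {q. x q \<noteq> 0}" using smult.IH by simp
    have "finite {q. c * x q \<noteq> 0} \<and>
        lincomb sz \<Psi> {q. c * x q \<noteq> 0} (\<lambda>q. c * x q) = lincomb sz \<Psi> {q. x q \<noteq> 0} (\<lambda>q. c * x q)"
      by (rule module.lincomb_support[OF m fin]) auto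
    then show ?case
      using smult.IH module.subspace_scale[OF m R] by (simp add: module.lincomb_scale[OF m])
  next
    case addL
    show ?case
      by (rule module.lincomb_support_in[OF m _ support_delta_diff]) (simp_all add: lincomb_simps generators)
  next
    case addR
    show ?case
      by (rule module.lincomb_support_in[OF m _ support_delta_diff]) (simp_all add: lincomb_simps generators)
  next
    case scL
    show ?case
      by (rule module.lincomb_support_in[OF m _ support_delta_diff_scale])
        (simp_all add: lincomb_simps generators)
  next
    case scR
    show ?case
      by (rule module.lincomb_support_in[OF m _ support_delta_diff_scale])
        (simp_all add: lincomb_simps generators)
  qed
qed

lemma tens_eq_sum_list_diff_in_subspace:
  fixes sz :: "'k::field \<Rightarrow> 'z::ab_group_add \<Rightarrow> 'z"
  assumes e: "tens_eq sv sw xs ys" and m: "module sz" and R: "module.subspace sz R"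
    and \<Psi>: "bilinear_modulo sv sw sz R \<Psi>"
  shows "(\<Sum>x\<leftarrow>xs. \<Psi> x) - (\<Sum>y\<leftarrow>ys. \<Psi> y) \<in> R"
proof -
  let ?x = "\<lambda>p. fsum xs p - fsum ys p :: 'k"
  let ?S = "set xs \<union> set ys"
  have "{q. ?x q \<noteq> 0} \<subseteq> ?S"
  proof
    fix q assume "q \<in> {q. ?x q \<noteq> 0}"
    then show "q \<in> ?S" by (cases "q \<in> ?S") (simp_all add: fsum_notin)
  qed
  then have "lincomb sz \<Psi> {q. ?x q \<noteq> 0} ?x = lincomb sz \<Psi> ?S ?x"
    using module.lincomb_support[OF m, of ?S ?x \<Psi>] by simp
  also have "\<dots> = (\<Sum>x\<leftarrow>xs. \<Psi> x) - (\<Sum>y\<leftarrow>ys. \<Psi> y)"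
    using module.lincomb_fsum[OF m, of ?S xs \<Psi>] module.lincomb_fsum[OF m, of ?S ys \<Psi>]
    by (simp add: module.lincomb_diff[OF m])
  finally show ?thesis
    using tens_rel_lincomb_in_subspace[OF e[unfolded tens_eq_def] m R \<Psi>] by simp
qed

lemma tens_eq_sum_list_eq:
  fixes sz :: "'k::field \<Rightarrow> 'z::ab_group_add \<Rightarrow> 'z"
  assumes e: "tens_eq sv sw xs ys" and m: "module sz"
    and "\<And>v v' w. \<Psi> (v + v', w) = \<Psi> (v, w) + \<Psi> (v', w)"
    and "\<And>v w w'. \<Psi> (v, w + w') = \<Psi> (v, w) + \<Psi> (v, w')"
    and "\<And>c v w. \<Psi> (sv c v, w) = sz c (\<Psi> (v, w))"
    and "\<And>c v w. \<Psi> (v, sw c w) = sz c (\<Psi> (v, w))"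
  shows "(\<Sum>x\<leftarrow>xs. \<Psi> x) = (\<Sum>y\<leftarrow>ys. \<Psi> y)"
proof -
  have "bilinear_modulo sv sw sz {0} \<Psi>"
    using assms(3-) by (simp add: bilinear_modulo_def)
  from tens_eq_sum_list_diff_in_subspace[OF e m module.subspace_single_0[OF m] this]
  show ?thesis by simp
qed

lemma tens_eq_concat_map:
  assumes "tens_eq sv sw xs ys"
    and "bilinear_modulo sv sw (\<lambda>c x p. c * x p) (tens_rel sv2 sw2) (\<lambda>q. fsum (M q))"
  shows "tens_eq sv2 sw2 (concat (map M xs)) (concat (map M ys))"
  using tens_eq_sum_list_diff_in_subspace[OF assms(1) module_pointwise tens_rel_subspace assms(2)]
  unfolding tens_eq_def fsum_concat fun_diff_def .

lemma tens_rel_fsum_map_diff: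
  assumes "\<And>y. y \<in> set Y \<Longrightarrow> (\<lambda>p. delta (A y) p - delta (B y) p - delta (C y) p) \<in> tens_rel sv sw"
  shows "(\<lambda>p. fsum (map A Y) p - fsum (map B Y) p - fsum (map C Y) p) \<in> tens_rel sv sw"
  using tens_rel_sum_list[OF assms] by (simp add: fsum_map sum_list_subtractf)

lemma tens_rel_fsum_map_diff_scale:
  assumes "\<And>y. y \<in> set Y \<Longrightarrow> (\<lambda>p. delta (A y) p - c * delta (B y) p) \<in> tens_rel sv sw"
  shows "(\<lambda>p. fsum (map A Y) p - c * fsum (map B Y) p) \<in> tens_rel sv sw"
  using tens_rel_sum_list[OF assms] by (simp add: fsum_map sum_list_subtractf sum_list_const_mult)

lemma tens_eq_concat_map_left:
  assumes "tens_eq s1 s2 X X'"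
    and "\<And>a a' c. \<phi> (a + a') c = \<phi> a c + \<phi> a' c" "\<And>k a c. \<phi> (s1 k a) c = s3 k (\<phi> a c)"
    and "\<And>b b' d. \<psi> (b + b') d = \<psi> b d + \<psi> b' d" "\<And>k b d. \<psi> (s2 k b) d = s4 k (\<psi> b d)"
  shows "tens_eq s3 s4 (concat (map (\<lambda>(a, b). map (\<lambda>(c, d). (\<phi> a c, \<psi> b d)) Y) X))
                       (concat (map (\<lambda>(a, b). map (\<lambda>(c, d). (\<phi> a c, \<psi> b d)) Y) X'))"
proof (rule tens_eq_concat_map[OF assms(1)])
  show "bilinear_modulo s1 s2 (\<lambda>c x p. c * x p) (tens_rel s3 s4)
      (\<lambda>q. fsum (case q of (a, b) \<Rightarrow> map (\<lambda>(c, d). (\<phi> a c, \<psi> b d)) Y))"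
    unfolding bilinear_modulo_def fun_diff_def
    by (simp add: assms(2-) split_def tens_rel_fsum_map_diff tens_rel_fsum_map_diff_scale
        tens_rel.addL tens_rel.addR tens_rel.scL tens_rel.scR)
qed

lemma tens_eq_map:
  assumes "tens_eq s1 s2 Y Y'"
    and "\<And>c c'. \<phi> (c + c') = \<phi> c + \<phi> c'" "\<And>k c. \<phi> (s1 k c) = s3 k (\<phi> c)"
    and "\<And>d d'. \<psi> (d + d') = \<psi> d + \<psi> d'" "\<And>k d. \<psi> (s2 k d) = s4 k (\<psi> d)"
  shows "tens_eq s3 s4 (map (\<lambda>(c, d). (\<phi> c, \<psi> d)) Y) (map (\<lambda>(c, d). (\<phi> c, \<psi> d)) Y')"
  \<comment> \<open>a one-element inner list turns the concatenated map into a plain map\<close>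
  using tens_eq_concat_map_left[OF assms(1), of "\<lambda>c _. \<phi> c" s3 "\<lambda>d _. \<psi> d" s4 "[((), ())]"] assms(2-)
  by (simp add: split_def)

lemma tens_eq_concat_pointwise:
  "(\<And>x. x \<in> set xs \<Longrightarrow> tens_eq sv sw (g x) (g' x))
    \<Longrightarrow> tens_eq sv sw (concat (map g xs)) (concat (map g' xs))"
  by (induction xs) (simp_all add: tens_eq_refl tens_eq_append)

lemma tens_eq_concat_map_cong:
  assumes "tens_eq s1 s2 X X'" "tens_eq t1 t2 Y Y'"
    and "\<And>a a' c. \<phi> (a + a') c = \<phi> a c + \<phi> a' c" "\<And>k a c. \<phi> (s1 k a) c = s3 k (\<phi> a c)"
    and "\<And>a c c'. \<phi> a (c + c') = \<phi> a c + \<phi> a c'" "\<And>k a c. \<phi> a (t1 k c) = s3 k (\<phi> a c)"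
    and "\<And>b b' d. \<psi> (b + b') d = \<psi> b d + \<psi> b' d" "\<And>k b d. \<psi> (s2 k b) d = s4 k (\<psi> b d)"
    and "\<And>b d d'. \<psi> b (d + d') = \<psi> b d + \<psi> b d'" "\<And>k b d. \<psi> b (t2 k d) = s4 k (\<psi> b d)"
  shows "tens_eq s3 s4 (concat (map (\<lambda>(a, b). map (\<lambda>(c, d). (\<phi> a c, \<psi> b d)) Y) X))
                       (concat (map (\<lambda>(a, b). map (\<lambda>(c, d). (\<phi> a c, \<psi> b d)) Y') X'))"
proof (rule tens_eq_trans)
  show "tens_eq s3 s4 (concat (map (\<lambda>(a, b). map (\<lambda>(c, d). (\<phi> a c, \<psi> b d)) Y) X))
                      (concat (map (\<lambda>(a, b). map (\<lambda>(c, d). (\<phi> a c, \<psi> b d)) Y) X'))"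
    using tens_eq_concat_map_left[OF assms(1)] assms(3,4,7,8) by blast
  show "tens_eq s3 s4 (concat (map (\<lambda>(a, b). map (\<lambda>(c, d). (\<phi> a c, \<psi> b d)) Y) X'))
                      (concat (map (\<lambda>(a, b). map (\<lambda>(c, d). (\<phi> a c, \<psi> b d)) Y') X'))"
  proof (rule tens_eq_concat_pointwise)
    fix x assume "x \<in> set X'"
    show "tens_eq s3 s4 ((\<lambda>(a, b). map (\<lambda>(c, d). (\<phi> a c, \<psi> b d)) Y) x)
                        ((\<lambda>(a, b). map (\<lambda>(c, d). (\<phi> a c, \<psi> b d)) Y') x)"
      using tens_eq_map[OF assms(2), of "\<phi> (fst x)" s3 "\<psi> (snd x)" s4] assms(5,6,9,10)
      by (simp add: split_def)
  qed
qed

section \<open>Group-like elements\<close>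

locale Hopf_algebra =
  fixes sH :: "'k::field_char_0 \<Rightarrow> 'h::ring_1 \<Rightarrow> 'h"
    and \<Delta> :: "'h \<Rightarrow> ('h \<times> 'h) list" and \<epsilon> :: "'h \<Rightarrow> 'k" and S :: "'h \<Rightarrow> 'h"
  assumes hopf: "hopf_algebra sH \<Delta> \<epsilon> S"
begin

lemma module_H: "module sH"
  using hopf by (simp add: hopf_algebra_def module_iff_vector_space)

lemma scale_mult_left: "sH c (x * y) = sH c x * y"
  and scale_mult_right: "sH c (x * y) = x * sH c y"
  using hopf unfolding hopf_algebra_def by blast+

lemma coproduct_mult:
  "tens_eq sH sH (\<Delta> (x * y)) (concat (map (\<lambda>(a, b). map (\<lambda>(c, d). (a * c, b * d)) (\<Delta> y)) (\<Delta> x)))"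
  using hopf unfolding hopf_algebra_def by blast

lemma coproduct_one: "tens_eq sH sH (\<Delta> 1) [(1, 1)]"
  and counit_mult: "\<epsilon> (x * y) = \<epsilon> x * \<epsilon> y"
  and counit_one: "\<epsilon> 1 = 1"
  using hopf unfolding hopf_algebra_def by blast+

lemma antipode_add: "S (x + y) = S x + S y"
  and antipode_scale: "S (sH c x) = sH c (S x)"
  using hopf unfolding hopf_algebra_def linear_map_def by blast+

lemma antipode_left: "(\<Sum>(x, y)\<leftarrow>\<Delta> h. S x * y) = sH (\<epsilon> h) 1"
  and antipode_right: "(\<Sum>(x, y)\<leftarrow>\<Delta> h. x * S y) = sH (\<epsilon> h) 1"
  using hopf unfolding hopf_algebra_def by blast+

lemma tens_eq_product:
  assumes "tens_eq sH sH X X'" "tens_eq sH sH Y Y'"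
  shows "tens_eq sH sH (concat (map (\<lambda>(a, b). map (\<lambda>(c, d). (a * c, b * d)) Y) X))
                       (concat (map (\<lambda>(a, b). map (\<lambda>(c, d). (a * c, b * d)) Y') X'))"
  by (rule tens_eq_concat_map_cong[OF assms])
    (simp_all add: distrib_left distrib_right flip: scale_mult_left scale_mult_right)

lemma tens_eq_left_mult:
  assumes "tens_eq sH sH Y Y'"
  shows "tens_eq sH sH (map (\<lambda>(c, d). (x * c, x * d)) Y) (map (\<lambda>(c, d). (x * c, x * d)) Y')"
  by (rule tens_eq_map[OF assms]) (simp_all add: distrib_left scale_mult_right)

lemma group_like_one: "group_like sH \<Delta> \<epsilon> 1"
  by (simp add: group_like_def coproduct_one counit_one)

lemma group_like_mult:
  assumes "group_like sH \<Delta> \<epsilon> x" "group_like sH \<Delta> \<epsilon> y"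
  shows "group_like sH \<Delta> \<epsilon> (x * y)"
proof -
  have "tens_eq sH sH (\<Delta> (x * y)) (concat (map (\<lambda>(a, b). map (\<lambda>(c, d). (a * c, b * d)) (\<Delta> y)) (\<Delta> x)))"
    by (rule coproduct_mult)
  also have "tens_eq sH sH \<dots> (concat (map (\<lambda>(a, b). map (\<lambda>(c, d). (a * c, b * d)) [(y, y)]) [(x, x)]))"
    using assms by (intro tens_eq_product) (simp_all add: group_like_def)
  finally show ?thesis
    using assms by (simp add: group_like_def counit_mult)
qed

lemma antipode_group_like:
  assumes "group_like sH \<Delta> \<epsilon> g"
  shows "S g * g = 1" "g * S g = 1"
proof -
  have e: "tens_eq sH sH (\<Delta> g) [(g, g)]" and "\<epsilon> g = 1"
    using assms by (simp_all add: group_like_def)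
  have "(\<Sum>(x, y)\<leftarrow>\<Delta> g. S x * y) = (\<Sum>(x, y)\<leftarrow>[(g, g)]. S x * y)"
    by (rule tens_eq_sum_list_eq[OF e module_H])
      (simp_all add: split_def antipode_add antipode_scale distrib_left distrib_right
        scale_mult_left flip: scale_mult_right)
  moreover have "(\<Sum>(x, y)\<leftarrow>\<Delta> g. x * S y) = (\<Sum>(x, y)\<leftarrow>[(g, g)]. x * S y)"
    by (rule tens_eq_sum_list_eq[OF e module_H])
      (simp_all add: split_def antipode_add antipode_scale distrib_left distrib_right
        scale_mult_left flip: scale_mult_right)
  ultimately show "S g * g = 1" "g * S g = 1"
    using antipode_left[of g] antipode_right[of g] \<open>\<epsilon> g = 1\<close> module.scale_one[OF module_H] by simp_all
qed

lemma group_like_antipode: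
  assumes g: "group_like sH \<Delta> \<epsilon> g"
  shows "group_like sH \<Delta> \<epsilon> (S g)"
proof -
  define h where "h = S g"
  have hg: "h * g = 1" and gh: "g * h = 1"
    using antipode_group_like[OF g] by (simp_all add: h_def)
  have "tens_eq sH sH (map (\<lambda>(c, d). (g * c, g * d)) (\<Delta> h))
      (concat (map (\<lambda>(a, b). map (\<lambda>(c, d). (a * c, b * d)) (\<Delta> h)) [(g, g)]))"
    by (simp add: tens_eq_refl split_def)
  also have "tens_eq sH sH \<dots> (concat (map (\<lambda>(a, b). map (\<lambda>(c, d). (a * c, b * d)) (\<Delta> h)) (\<Delta> g)))"
    using g by (intro tens_eq_product[OF tens_eq_sym tens_eq_refl]) (simp add: group_like_def)
  also have "tens_eq sH sH \<dots> (\<Delta> (g * h))"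
    by (rule tens_eq_sym[OF coproduct_mult])
  also have "tens_eq sH sH \<dots> [(1, 1)]"
    using coproduct_one gh by simp
  finally have "tens_eq sH sH (map (\<lambda>(c, d). (g * c, g * d)) (\<Delta> h)) [(1, 1)]" .
  from tens_eq_left_mult[OF this, of h]
  have "tens_eq sH sH (\<Delta> h) [(h, h)]"
    by (simp add: split_def mult.assoc[symmetric] hg comp_def)
  moreover have "\<epsilon> h = 1"
    using counit_mult[of h g] hg g counit_one by (simp add: group_like_def)
  ultimately show ?thesis
    by (simp add: group_like_def h_def)
qed

end

section \<open>Edge-like elements\<close>

lemma exists_linear_functional_eq_one:
  fixes s :: "'k::field \<Rightarrow> 'a::ab_group_add \<Rightarrow> 'a"
  assumes "vector_space s" "a \<noteq> 0"
  obtains \<phi> :: "'a \<Rightarrow> 'k" where "\<And>x y. \<phi> (x + y) = \<phi> x + \<phi> y" "\<And>c x. \<phi> (s c x) = c * \<phi> x" "\<phi> a = 1"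
proof -
  have "vector_space ((*) :: 'k \<Rightarrow> 'k \<Rightarrow> 'k)"
    by unfold_locales (simp_all add: algebra_simps)
  then interpret vector_space_pair s "(*) :: 'k \<Rightarrow> 'k \<Rightarrow> 'k"
    using assms(1) by (simp add: vector_space_pair_def)
  have "vs1.independent {a}"
    using vs1.independent_insertI[of a "{}"] assms(2) by simp
  then obtain \<phi> where "Vector_Spaces.linear s (*) \<phi>" "\<phi> a = 1"
    using linear_independent_extend[of "{a}" "\<lambda>_. 1"] by auto
  then show ?thesis
    using that module_hom.add module_hom.scale by (metis module_hom_iff_linear)
qed

locale LM_Hopf_algebra =
  fixes sH :: "'k::field_char_0 \<Rightarrow> 'h::ring_1 \<Rightarrow> 'h"
    and \<Delta>0 :: "'h \<Rightarrow> ('h \<times> 'h) list" and \<epsilon> :: "'h \<Rightarrow> 'k" and S0 :: "'h \<Rightarrow> 'h"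
    and sA :: "'k \<Rightarrow> 'a::ab_group_add \<Rightarrow> 'a"
    and lact :: "'h \<Rightarrow> 'a \<Rightarrow> 'a" and ract :: "'a \<Rightarrow> 'h \<Rightarrow> 'a"
    and f :: "'a \<Rightarrow> 'h" and \<Delta>1 :: "'a \<Rightarrow> ('a \<times> 'h) list \<times> ('h \<times> 'a) list"
    and S1 :: "'a \<Rightarrow> 'a"
  assumes hopf_LM: "hopf_LM sH \<Delta>0 \<epsilon> S0 sA lact ract f \<Delta>1 S1"

sublocale LM_Hopf_algebra \<subseteq> Hopf_algebra sH \<Delta>0 \<epsilon> S0
  using hopf_LM by unfold_locales (simp add: hopf_LM_def)

context LM_Hopf_algebra
begin

lemma vector_space_A: "vector_space sA"
  using hopf_LM by (simp add: hopf_LM_def)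

lemma lact_add_left: "lact (x + y) a = lact x a + lact y a"
  and lact_add_right: "lact x (a + b) = lact x a + lact x b"
  and lact_scale_left: "lact (sH c x) a = sA c (lact x a)"
  and lact_scale_right: "lact x (sA c a) = sA c (lact x a)"
  and lact_mult: "lact (x * y) a = lact x (lact y a)"
  and lact_one: "lact 1 a = a"
  and ract_add_left: "ract (a + b) x = ract a x + ract b x"
  and ract_add_right: "ract a (x + y) = ract a x + ract a y"
  and ract_scale_left: "ract (sA c a) x = sA c (ract a x)"
  and ract_scale_right: "ract a (sH c x) = sA c (ract a x)"
  and ract_mult: "ract a (x * y) = ract (ract a x) y"
  and ract_one: "ract a 1 = a"
  and lact_ract: "lact x (ract a y) = ract (lact x a) y"
  using hopf_LM by (simp_all add: hopf_LM_def)

lemma coproduct_lact: "dsum_eq sH sA (\<Delta>1 (lact h a)) (dsum_lact \<Delta>0 lact h (\<Delta>1 a))"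
  and coproduct_ract: "dsum_eq sH sA (\<Delta>1 (ract a h)) (dsum_ract \<Delta>0 ract (\<Delta>1 a) h)"
  using hopf_LM unfolding hopf_LM_def by blast+

lemma lact_zero: "lact x 0 = 0"
  using lact_add_right[of x 0 0] by simp

lemma ract_zero: "ract 0 x = 0"
  using ract_add_left[of 0 0 x] by simp

lemma lact_antipode_group_like: "group_like sH \<Delta>0 \<epsilon> g \<Longrightarrow> lact (S0 g) (lact g a) = a"
  by (simp add: antipode_group_like lact_one flip: lact_mult)

lemma ract_antipode_group_like: "group_like sH \<Delta>0 \<epsilon> g \<Longrightarrow> ract (ract a g) (S0 g) = a"
  by (simp add: antipode_group_like ract_one flip: ract_mult)

text \<open>For \<open>a = 0\<close> every pair \<open>s, t\<close> of group-likes qualifies, so the \<open>THE\<close> in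
  \<open>edge_src\<close> and \<open>edge_tgt\<close> is meaningful only for nonzero edges.\<close>

lemma edge_like_st_unique:
  assumes "a \<noteq> 0" "edge_like_st sH \<Delta>0 \<epsilon> sA \<Delta>1 a s t" "edge_like_st sH \<Delta>0 \<epsilon> sA \<Delta>1 a s' t'"
  shows "s = s'" "t = t'"
proof -
  obtain \<phi> where \<phi>: "\<And>x y. \<phi> (x + y) = \<phi> x + \<phi> y" "\<And>c x. \<phi> (sA c x) = c * \<phi> x" "\<phi> a = 1"
    using exists_linear_functional_eq_one[OF vector_space_A assms(1)] by blast
  note scale_laws = module.scale_left_distrib[OF module_H] module.scale_right_distrib[OF module_H]
    module.scale_scale[OF module_H] module.scale_left_commute[OF module_H] module.scale_one[OF module_H]
  have "(\<Sum>(b, y)\<leftarrow>X. sH (\<phi> b) y) = (\<Sum>(b, y)\<leftarrow>Y. sH (\<phi> b) y)" if "tens_eq sA sH X Y" for X Y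
    by (rule tens_eq_sum_list_eq[OF that module_H]) (simp_all add: split_def \<phi> scale_laws mult.commute)
  moreover have "(\<Sum>(y, b)\<leftarrow>X. sH (\<phi> b) y) = (\<Sum>(y, b)\<leftarrow>Y. sH (\<phi> b) y)" if "tens_eq sH sA X Y" for X Y
    by (rule tens_eq_sum_list_eq[OF that module_H]) (simp_all add: split_def \<phi> scale_laws mult.commute)
  moreover have "tens_eq sA sH [(a, t)] [(a, t')]" "tens_eq sH sA [(s, a)] [(s', a)]"
    using assms(2,3) by (auto simp: edge_like_st_def dsum_eq_def intro: tens_eq_trans tens_eq_sym)
  ultimately show "s = s'" "t = t'"
    by (fastforce simp: \<phi> scale_laws)+
qed

lemma edge_src_tgt_eq:
  assumes "a \<noteq> 0" "edge_like_st sH \<Delta>0 \<epsilon> sA \<Delta>1 a s t"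
  shows "edge_src sH \<Delta>0 \<epsilon> sA \<Delta>1 a = s" "edge_tgt sH \<Delta>0 \<epsilon> sA \<Delta>1 a = t"
  unfolding edge_src_def edge_tgt_def
  using assms edge_like_st_unique[OF assms(1)] by (blast intro: the_equality)+

lemmas action_linearity = lact_add_left lact_add_right lact_scale_left lact_scale_right
  ract_add_left ract_add_right ract_scale_left ract_scale_right distrib_left distrib_right

lemma edge_like_lact:
  assumes g: "group_like sH \<Delta>0 \<epsilon> g" and e: "edge_like_st sH \<Delta>0 \<epsilon> sA \<Delta>1 a s t"
  shows "edge_like_st sH \<Delta>0 \<epsilon> sA \<Delta>1 (lact g a) (g * s) (g * t)"
proof -
  have dg: "tens_eq sH sH (\<Delta>0 g) [(g, g)]"
    using g by (simp add: group_like_def)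
  have e1: "tens_eq sA sH (fst (\<Delta>1 a)) [(a, t)]" and e2: "tens_eq sH sA (snd (\<Delta>1 a)) [(s, a)]"
    using e by (simp_all add: edge_like_st_def dsum_eq_def)
  have "tens_eq sA sH (fst (\<Delta>1 (lact g a)))
      (concat (map (\<lambda>(h1, h2). map (\<lambda>(b, y). (lact h1 b, h2 * y)) (fst (\<Delta>1 a))) (\<Delta>0 g)))"
    using coproduct_lact by (simp add: dsum_eq_def dsum_lact_def)
  also have "tens_eq sA sH \<dots> (concat (map (\<lambda>(h1, h2). map (\<lambda>(b, y). (lact h1 b, h2 * y)) [(a, t)]) [(g, g)]))"
    by (rule tens_eq_concat_map_cong[OF dg e1])
      (simp_all add: action_linearity flip: scale_mult_left scale_mult_right)
  finally have fst_eq: "tens_eq sA sH (fst (\<Delta>1 (lact g a))) [(lact g a, g * t)]"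
    by simp
  have "tens_eq sH sA (snd (\<Delta>1 (lact g a)))
      (concat (map (\<lambda>(h1, h2). map (\<lambda>(y, b). (h1 * y, lact h2 b)) (snd (\<Delta>1 a))) (\<Delta>0 g)))"
    using coproduct_lact by (simp add: dsum_eq_def dsum_lact_def)
  also have "tens_eq sH sA \<dots> (concat (map (\<lambda>(h1, h2). map (\<lambda>(y, b). (h1 * y, lact h2 b)) [(s, a)]) [(g, g)]))"
    by (rule tens_eq_concat_map_cong[OF dg e2])
      (simp_all add: action_linearity flip: scale_mult_left scale_mult_right)
  finally have snd_eq: "tens_eq sH sA (snd (\<Delta>1 (lact g a))) [(g * s, lact g a)]"
    by simp
  show ?thesis
    using fst_eq snd_eq e g group_like_mult by (simp add: edge_like_st_def dsum_eq_def)
qed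

lemma edge_like_ract:
  assumes g: "group_like sH \<Delta>0 \<epsilon> g" and e: "edge_like_st sH \<Delta>0 \<epsilon> sA \<Delta>1 a s t"
  shows "edge_like_st sH \<Delta>0 \<epsilon> sA \<Delta>1 (ract a g) (s * g) (t * g)"
proof -
  have dg: "tens_eq sH sH (\<Delta>0 g) [(g, g)]"
    using g by (simp add: group_like_def)
  have e1: "tens_eq sA sH (fst (\<Delta>1 a)) [(a, t)]" and e2: "tens_eq sH sA (snd (\<Delta>1 a)) [(s, a)]"
    using e by (simp_all add: edge_like_st_def dsum_eq_def)
  have "tens_eq sA sH (fst (\<Delta>1 (ract a g)))
      (concat (map (\<lambda>(h1, h2). map (\<lambda>(b, y). (ract b h1, y * h2)) (fst (\<Delta>1 a))) (\<Delta>0 g)))"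
    using coproduct_ract by (simp add: dsum_eq_def dsum_ract_def)
  also have "tens_eq sA sH \<dots> (concat (map (\<lambda>(h1, h2). map (\<lambda>(b, y). (ract b h1, y * h2)) [(a, t)]) [(g, g)]))"
    by (rule tens_eq_concat_map_cong[OF dg e1])
      (simp_all add: action_linearity flip: scale_mult_left scale_mult_right)
  finally have fst_eq: "tens_eq sA sH (fst (\<Delta>1 (ract a g))) [(ract a g, t * g)]"
    by simp
  have "tens_eq sH sA (snd (\<Delta>1 (ract a g)))
      (concat (map (\<lambda>(h1, h2). map (\<lambda>(y, b). (y * h1, ract b h2)) (snd (\<Delta>1 a))) (\<Delta>0 g)))"
    using coproduct_ract by (simp add: dsum_eq_def dsum_ract_def)
  also have "tens_eq sH sA \<dots> (concat (map (\<lambda>(h1, h2). map (\<lambda>(y, b). (y * h1, ract b h2)) [(s, a)]) [(g, g)]))"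
    by (rule tens_eq_concat_map_cong[OF dg e2])
      (simp_all add: action_linearity flip: scale_mult_left scale_mult_right)
  finally have snd_eq: "tens_eq sH sA (snd (\<Delta>1 (ract a g))) [(s * g, ract a g)]"
    by simp
  show ?thesis
    using fst_eq snd_eq e g group_like_mult by (simp add: edge_like_st_def dsum_eq_def)
qed

lemma group_like_edge_src_tgt:
  assumes "a \<noteq> 0" "edge_like sH \<Delta>0 \<epsilon> sA \<Delta>1 a"
  shows "group_like sH \<Delta>0 \<epsilon> (edge_src sH \<Delta>0 \<epsilon> sA \<Delta>1 a)"
    "group_like sH \<Delta>0 \<epsilon> (edge_tgt sH \<Delta>0 \<epsilon> sA \<Delta>1 a)"
  using assms edge_src_tgt_eq by (auto simp: edge_like_def edge_like_st_def)

lemma edge_like_lact_group_like: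
  assumes g: "group_like sH \<Delta>0 \<epsilon> g" and a: "a \<noteq> 0" "edge_like sH \<Delta>0 \<epsilon> sA \<Delta>1 a"
  shows "lact g a \<noteq> 0" "edge_like sH \<Delta>0 \<epsilon> sA \<Delta>1 (lact g a)"
    "edge_src sH \<Delta>0 \<epsilon> sA \<Delta>1 (lact g a) = g * edge_src sH \<Delta>0 \<epsilon> sA \<Delta>1 a"
    "edge_tgt sH \<Delta>0 \<epsilon> sA \<Delta>1 (lact g a) = g * edge_tgt sH \<Delta>0 \<epsilon> sA \<Delta>1 a"
proof -
  obtain s t where e: "edge_like_st sH \<Delta>0 \<epsilon> sA \<Delta>1 a s t"
    using a by (auto simp: edge_like_def)
  show nonzero: "lact g a \<noteq> 0"
    using lact_antipode_group_like[OF g, of a] a lact_zero by auto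
  show "edge_like sH \<Delta>0 \<epsilon> sA \<Delta>1 (lact g a)"
    using edge_like_lact[OF g e] by (auto simp: edge_like_def)
  show "edge_src sH \<Delta>0 \<epsilon> sA \<Delta>1 (lact g a) = g * edge_src sH \<Delta>0 \<epsilon> sA \<Delta>1 a"
    "edge_tgt sH \<Delta>0 \<epsilon> sA \<Delta>1 (lact g a) = g * edge_tgt sH \<Delta>0 \<epsilon> sA \<Delta>1 a"
    using edge_src_tgt_eq[OF nonzero edge_like_lact[OF g e]] edge_src_tgt_eq[OF a(1) e] by simp_all
qed

lemma edge_like_ract_group_like:
  assumes g: "group_like sH \<Delta>0 \<epsilon> g" and a: "a \<noteq> 0" "edge_like sH \<Delta>0 \<epsilon> sA \<Delta>1 a"
  shows "ract a g \<noteq> 0" "edge_like sH \<Delta>0 \<epsilon> sA \<Delta>1 (ract a g)"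
    "edge_src sH \<Delta>0 \<epsilon> sA \<Delta>1 (ract a g) = edge_src sH \<Delta>0 \<epsilon> sA \<Delta>1 a * g"
    "edge_tgt sH \<Delta>0 \<epsilon> sA \<Delta>1 (ract a g) = edge_tgt sH \<Delta>0 \<epsilon> sA \<Delta>1 a * g"
proof -
  obtain s t where e: "edge_like_st sH \<Delta>0 \<epsilon> sA \<Delta>1 a s t"
    using a by (auto simp: edge_like_def)
  show nonzero: "ract a g \<noteq> 0"
    using ract_antipode_group_like[OF g, of a] a ract_zero by auto
  show "edge_like sH \<Delta>0 \<epsilon> sA \<Delta>1 (ract a g)"
    using edge_like_ract[OF g e] by (auto simp: edge_like_def)
  show "edge_src sH \<Delta>0 \<epsilon> sA \<Delta>1 (ract a g) = edge_src sH \<Delta>0 \<epsilon> sA \<Delta>1 a * g"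
    "edge_tgt sH \<Delta>0 \<epsilon> sA \<Delta>1 (ract a g) = edge_tgt sH \<Delta>0 \<epsilon> sA \<Delta>1 a * g"
    using edge_src_tgt_eq[OF nonzero edge_like_ract[OF g e]] edge_src_tgt_eq[OF a(1) e] by simp_all
qed

theorem group_like_graph_edge_like:
  "group_like_graph {g. group_like sH \<Delta>0 \<epsilon> g} {a. a \<noteq> 0 \<and> edge_like sH \<Delta>0 \<epsilon> sA \<Delta>1 a}
     (edge_src sH \<Delta>0 \<epsilon> sA \<Delta>1) (edge_tgt sH \<Delta>0 \<epsilon> sA \<Delta>1) (*) ract lact"
proof -
  have "\<exists>y\<in>{g. group_like sH \<Delta>0 \<epsilon> g}. x * y = 1 \<and> y * x = 1" if "group_like sH \<Delta>0 \<epsilon> x" for x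
    using that group_like_antipode antipode_group_like by blast
  then show ?thesis
    unfolding group_like_graph_def
    using group_like_edge_src_tgt edge_like_lact_group_like edge_like_ract_group_like
      group_like_mult group_like_one
    by (auto simp: mult.assoc lact_mult lact_ract simp flip: ract_mult)
qed

end

theorem mainTheorem12:
  fixes sH :: "'k::field_char_0 \<Rightarrow> 'h::ring_1 \<Rightarrow> 'h"
    and \<Delta>0 :: "'h \<Rightarrow> ('h \<times> 'h) list" and \<epsilon> :: "'h \<Rightarrow> 'k" and S0 :: "'h \<Rightarrow> 'h"
    and sA :: "'k \<Rightarrow> 'a::ab_group_add \<Rightarrow> 'a"
    and lact :: "'h \<Rightarrow> 'a \<Rightarrow> 'a" and ract :: "'a \<Rightarrow> 'h \<Rightarrow> 'a"
    and f :: "'a \<Rightarrow> 'h" and \<Delta>1 :: "'a \<Rightarrow> ('a \<times> 'h) list \<times> ('h \<times> 'a) list"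
    and S1 :: "'a \<Rightarrow> 'a"
  assumes "hopf_LM sH \<Delta>0 \<epsilon> S0 sA lact ract f \<Delta>1 S1"
  defines "G0 \<equiv> {g. group_like sH \<Delta>0 \<epsilon> g}"
      and "G1 \<equiv> {a. a \<noteq> 0 \<and> edge_like sH \<Delta>0 \<epsilon> sA \<Delta>1 a}"
  shows "(\<forall>g\<in>G0. \<forall>a\<in>G1. lact g a \<in> G1 \<and> ract a g \<in> G1) \<and>
         group_like_graph G0 G1 (edge_src sH \<Delta>0 \<epsilon> sA \<Delta>1) (edge_tgt sH \<Delta>0 \<epsilon> sA \<Delta>1)
           (*) ract lact"
proof -
  interpret LM_Hopf_algebra sH \<Delta>0 \<epsilon> S0 sA lact ract f \<Delta>1 S1
    by unfold_locales (fact assms(1))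
  show ?thesis
    unfolding assms(2,3)
    using edge_like_lact_group_like edge_like_ract_group_like group_like_graph_edge_like by auto
qed

end
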